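(* Let $a>1$, $d\ge 4$, and let $G$ be generated by the security model $\mathcal{S}(n,a,d)$. Let $T_1=\log^{a+1} n$ and let $C_t$ be the set of colors appearing in $G_t$ (the graph at the end of time step $t$). Then with probability $1-o(1)$, for all $t$ with $T_1\le t\le n$, $$\frac{t}{2\log^a t}\le |C_t|\le \frac{2t}{\log^a t}.$$
   Context: Security model $\mathcal{S}(n,a,d)$ (homophyly exponent $a$, natural number $d$): start with an initial graph $G_2$ on two nodes, each of which is a seed node with its own distinct color. For $i=3,\dots,n$, given $G_{i-1}$, let $p_i=(\log i)^{-a}$ and create a new node $v$. With probability $p_i$, $v$ receives a brand-new color $c$ and is called the seed node of $c$; then one edge $(v,u)$ is added with $u$ chosen with probability proportional to degrees in $G_{i-1}$, and $d-1$ edges $(v,u_j)$ are added, each $u_j$ chosen uniformly at random among all seed nodes of $G_{i-1}$. Otherwise, $v$ picks a color $c$ uniformly at random among all colors present in $G_{i-1}$, takes color $c$, and $d$ edges $(v,u_j)$ are added, each $u_j$ chosen with probability proportional to degree among the nodes of color $c$ in $G_{i-1}$. The network is $G=G_n$, and step $i$ is the step creating the $i$-th node. *)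

theory Defs
  imports "HOL-Probability.Probability"
begin

text \<open>Nodes are 0,1,2,... in order of creation;
  colors are 0,1,2,... in order of creation.
  cols ! v  = color of node v;
  seeds ! c = the seed node of color c;
  edges     = list (multiset) of edges (v, u), v the newer endpoint.\<close>
record sm_state =
  cols  :: "nat list"
  seeds :: "nat list"
  edges :: "(nat \<times> nat) list"

definition endpoints :: "sm_state \<Rightarrow> nat multiset" where
  "endpoints s = mset (concat (map (\<lambda>(u, v). [u, v]) (edges s)))"

definition deg_pmf :: "sm_state \<Rightarrow> nat pmf" where
  "deg_pmf s = pmf_of_multiset (endpoints s)"

definition deg_color_pmf :: "sm_state \<Rightarrow> nat \<Rightarrow> nat pmf" where
  "deg_color_pmf s c = pmf_of_multiset (filter_mset (\<lambda>v. cols s ! v = c) (endpoints s))"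

primrec iid_pmf :: "nat \<Rightarrow> 'a pmf \<Rightarrow> 'a list pmf" where
  "iid_pmf 0 p = return_pmf []"
| "iid_pmf (Suc k) p = bind_pmf p (\<lambda>x. bind_pmf (iid_pmf k p) (\<lambda>xs. return_pmf (x # xs)))"

text \<open>step i of S(n,a,d): creates the i-th node (index i-1) from G_{i-1}\<close>
definition sm_step :: "real \<Rightarrow> nat \<Rightarrow> nat \<Rightarrow> sm_state \<Rightarrow> sm_state pmf" where
  "sm_step a d i s =
     bind_pmf (bernoulli_pmf (ln (real i) powr (- a))) (\<lambda>b.
       let v = length (cols s) in
       if b then
         bind_pmf (deg_pmf s) (\<lambda>u.
         bind_pmf (iid_pmf (d - 1) (pmf_of_set (set (seeds s)))) (\<lambda>us.
           return_pmf \<lparr> cols = cols s @ [length (seeds s)],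
                        seeds = seeds s @ [v],
                        edges = edges s @ map (\<lambda>w. (v, w)) (u # us) \<rparr>))
       else
         bind_pmf (pmf_of_set {..<length (seeds s)}) (\<lambda>c.
         bind_pmf (iid_pmf d (deg_color_pmf s c)) (\<lambda>us.
           return_pmf \<lparr> cols = cols s @ [c],
                        seeds = seeds s,
                        edges = edges s @ map (\<lambda>w. (v, w)) us \<rparr>)))"

definition G2 :: sm_state where
  "G2 = \<lparr> cols = [0, 1], seeds = [0, 1], edges = [(0, 1)] \<rparr>"

text \<open>distribution of G_n (for n \<le> 2 this is G_2)\<close>
primrec sm_gen :: "real \<Rightarrow> nat \<Rightarrow> nat \<Rightarrow> sm_state pmf" where
  "sm_gen a d 0 = return_pmf G2"
| "sm_gen a d (Suc n) =
     (if Suc n \<le> 2 then return_pmf G2 else bind_pmf (sm_gen a d n) (sm_step a d (Suc n)))"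

text \<open>C_t: the colors appearing in G_t, i.e. among the first t nodes of G = G_n\<close>
definition colors_at :: "sm_state \<Rightarrow> nat \<Rightarrow> nat set" where
  "colors_at G t = {cols G ! v | v. v < t}"

end

theory Submission
  imports Defs "HOL-Real_Asymp.Real_Asymp"
begin

text \<open>A new colour appears at step \<open>i\<close> exactly when the new node is a seed, which happens with
  probability \<open>p\<^sub>i = (log i)\<^sup>-\<^sup>a\<close> independently of everything before; so \<open>|C\<^sub>t|\<close> is \<open>2\<close> plus a sum of
  independent Bernoulli(\<open>p\<^sub>i\<close>) variables, \<open>3 \<le> i \<le> t\<close>, whatever the edges are. The mean \<open>\<Sum> p\<^sub>i\<close> is \<open>(1 + o(1)) t / log\<^sup>a t\<close>, and Chernoff bounds
  obtained from the generating function at \<open>z = 2\<close> and \<open>z = 1/2\<close> bound both deviations by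
  \<open>exp (- t / (10 log\<^sup>a t)) \<le> exp (- t / (10 log\<^sup>a n))\<close>. Summing this geometric tail over
  \<open>t \<ge> log\<^sup>a\<^sup>+\<^sup>1 n\<close> gives a failure probability \<open>O(log\<^sup>a n \<cdot> n\<^sup>-\<^sup>1\<^sup>/\<^sup>1\<^sup>0)\<close>.\<close>

section \<open>The colour count as a sum of coin flips\<close>

definition wf_state :: "sm_state \<Rightarrow> bool" where
  "wf_state s \<longleftrightarrow> seeds s \<noteq> [] \<and> set (cols s) = {..<length (seeds s)}"

definition seed_prob :: "real \<Rightarrow> nat \<Rightarrow> real" where
  "seed_prob a i = ln (real i) powr (- a)"

definition sm_branch :: "nat \<Rightarrow> sm_state \<Rightarrow> bool \<Rightarrow> sm_state pmf" where
  "sm_branch d s b =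
     (let v = length (cols s) in
       if b then
         bind_pmf (deg_pmf s) (\<lambda>u.
         bind_pmf (iid_pmf (d - 1) (pmf_of_set (set (seeds s)))) (\<lambda>us.
           return_pmf \<lparr> cols = cols s @ [length (seeds s)],
                        seeds = seeds s @ [v],
                        edges = edges s @ map (\<lambda>w. (v, w)) (u # us) \<rparr>))
       else
         bind_pmf (pmf_of_set {..<length (seeds s)}) (\<lambda>c.
         bind_pmf (iid_pmf d (deg_color_pmf s c)) (\<lambda>us.
           return_pmf \<lparr> cols = cols s @ [c],
                        seeds = seeds s,
                        edges = edges s @ map (\<lambda>w. (v, w)) us \<rparr>)))"

lemma sm_step_eq_bind: "sm_step a d i s = bind_pmf (bernoulli_pmf (seed_prob a i)) (sm_branch d s)"
  unfolding sm_step_def sm_branch_def seed_prob_def ..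

lemma set_sm_branch:
  assumes "wf_state s" and "x \<in> set_pmf (sm_branch d s b)"
  shows "wf_state x \<and> (\<exists>c. cols x = cols s @ [c]) \<and>
         card (set (cols x)) = card (set (cols s)) + of_bool b"
proof -
  have seeds: "seeds s \<noteq> []" and cols: "set (cols s) = {..<length (seeds s)}"
    using assms(1) by (auto simp: wf_state_def)
  show ?thesis
  proof (cases b)
    case True
    with assms(2) have "cols x = cols s @ [length (seeds s)]" "seeds x = seeds s @ [length (cols s)]"
      by (auto simp: sm_branch_def Let_def)
    then show ?thesis using cols by (auto simp: wf_state_def lessThan_Suc True)
  next
    case False
    have "set_pmf (pmf_of_set {..<length (seeds s)}) = {..<length (seeds s)}"
      using seeds by (intro set_pmf_of_set) auto
    with assms(2) False obtain c where "c < length (seeds s)" "cols x = cols s @ [c]" "seeds x = seeds s"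
      by (auto simp: sm_branch_def Let_def)
    then show ?thesis using cols seeds by (auto simp: wf_state_def insert_absorb False)
  qed
qed

lemma set_sm_step:
  "wf_state s \<Longrightarrow> x \<in> set_pmf (sm_step a d i s) \<Longrightarrow> wf_state x \<and> (\<exists>c. cols x = cols s @ [c])"
  using set_sm_branch by (fastforce simp: sm_step_eq_bind)

lemma num_colors_sm_step:
  assumes "wf_state s"
  shows "map_pmf (\<lambda>x. card (set (cols x))) (sm_step a d i s) =
         map_pmf (\<lambda>b. card (set (cols s)) + of_bool b) (bernoulli_pmf (seed_prob a i))"
proof -
  have "map_pmf (\<lambda>x. card (set (cols x))) (sm_branch d s b) =
        return_pmf (card (set (cols s)) + of_bool b)" for b
    using set_sm_branch[OF assms] by (simp add: map_pmf_eq_return_pmf_iff)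
  then have "map_pmf (\<lambda>x. card (set (cols x))) (sm_step a d i s) =
             bind_pmf (bernoulli_pmf (seed_prob a i)) (\<lambda>b. return_pmf (card (set (cols s)) + of_bool b))"
    by (simp add: sm_step_eq_bind map_bind_pmf)
  then show ?thesis by (simp add: map_pmf_def)
qed

lemma set_sm_gen: "x \<in> set_pmf (sm_gen a d n) \<Longrightarrow> wf_state x \<and> length (cols x) = max 2 n"
proof (induction n arbitrary: x)
  case 0
  then show ?case by (auto simp: G2_def wf_state_def lessThan_Suc)
next
  case (Suc n)
  show ?case
  proof (cases "Suc n \<le> 2")
    case True
    then show ?thesis using Suc.prems by (auto simp: G2_def wf_state_def lessThan_Suc)
  next
    case False
    then obtain s where "s \<in> set_pmf (sm_gen a d n)" and "x \<in> set_pmf (sm_step a d (Suc n) s)"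
      using Suc.prems by auto
    then show ?thesis using Suc.IH set_sm_step False by fastforce
  qed
qed

lemma sm_gen_take_cols:
  assumes "2 \<le> t" "t \<le> n"
  shows "map_pmf (\<lambda>G. take t (cols G)) (sm_gen a d n) = map_pmf cols (sm_gen a d t)"
  using assms(2)
proof (induction n rule: dec_induct)
  case base
  show ?case
    by (rule map_pmf_cong) (use set_sm_gen assms(1) in auto)
next
  case (step n)
  have step_keeps_prefix: "map_pmf (\<lambda>G. take t (cols G)) (sm_step a d (Suc n) s) = return_pmf (take t (cols s))"
    if "s \<in> set_pmf (sm_gen a d n)" for s
    unfolding map_pmf_eq_return_pmf_iff
  proof
    fix x assume "x \<in> set_pmf (sm_step a d (Suc n) s)"
    moreover have "wf_state s" "t \<le> length (cols s)"
      using set_sm_gen[OF that] step.hyps by auto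
    ultimately obtain c where "cols x = cols s @ [c]" using set_sm_step by blast
    with \<open>t \<le> length (cols s)\<close> show "take t (cols x) = take t (cols s)" by simp
  qed
  have "map_pmf (\<lambda>G. take t (cols G)) (sm_gen a d (Suc n)) =
        bind_pmf (sm_gen a d n) (\<lambda>s. map_pmf (\<lambda>G. take t (cols G)) (sm_step a d (Suc n) s))"
    using step.hyps assms(1) by (simp add: map_bind_pmf)
  also have "\<dots> = map_pmf (\<lambda>G. take t (cols G)) (sm_gen a d n)"
    unfolding map_pmf_def by (rule bind_pmf_cong) (simp_all add: step_keeps_prefix[unfolded map_pmf_def])
  finally show ?case using step.IH by simp
qed

definition num_colors_pmf :: "real \<Rightarrow> nat \<Rightarrow> nat \<Rightarrow> nat pmf" where
  "num_colors_pmf a d t = map_pmf (\<lambda>G. card (set (cols G))) (sm_gen a d t)"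

lemma num_colors_pmf_2: "num_colors_pmf a d 2 = return_pmf 2"
  by (simp add: num_colors_pmf_def G2_def numeral_2_eq_2)

lemma num_colors_pmf_Suc:
  assumes "2 \<le> t"
  shows "num_colors_pmf a d (Suc t) =
         bind_pmf (num_colors_pmf a d t)
           (\<lambda>k. map_pmf (\<lambda>b. k + of_bool b) (bernoulli_pmf (seed_prob a (Suc t))))"
proof -
  have "num_colors_pmf a d (Suc t) =
        bind_pmf (sm_gen a d t) (\<lambda>s. map_pmf (\<lambda>x. card (set (cols x))) (sm_step a d (Suc t) s))"
    using assms by (simp add: num_colors_pmf_def map_bind_pmf)
  also have "\<dots> = bind_pmf (sm_gen a d t)
      (\<lambda>s. map_pmf (\<lambda>b. card (set (cols s)) + of_bool b) (bernoulli_pmf (seed_prob a (Suc t))))"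
    by (intro bind_pmf_cong refl num_colors_sm_step) (use set_sm_gen in blast)
  finally show ?thesis by (simp add: num_colors_pmf_def bind_map_pmf)
qed

lemma one_le_ln: "3 \<le> x \<Longrightarrow> 1 \<le> ln (x::real)"
  using exp_le by (subst ln_ge_iff) auto

lemma seed_prob_nonneg: "0 \<le> seed_prob a i"
  by (simp add: seed_prob_def)

lemma seed_prob_le_1: "0 \<le> a \<Longrightarrow> 3 \<le> i \<Longrightarrow> seed_prob a i \<le> 1"
  unfolding seed_prob_def using powr_mono[of "- a" 0 "ln (real i)"] one_le_ln[of "real i"] by simp

lemma nn_integral_bernoulli_power:
  assumes "0 \<le> p" "p \<le> 1" "0 \<le> z"
  shows "(\<integral>\<^sup>+b. ennreal (z ^ (k + of_bool b)) \<partial>bernoulli_pmf p) = ennreal (1 - p + p * z) * ennreal (z ^ k)"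
proof -
  have "(\<integral>\<^sup>+b. ennreal (z ^ (k + of_bool b)) \<partial>bernoulli_pmf p) =
        ennreal (z ^ (k + 1) * p) + ennreal (z ^ k * (1 - p))"
    using assms by (simp add: ennreal_mult)
  also have "\<dots> = ennreal (z ^ (k + 1) * p + z ^ k * (1 - p))"
    using assms by (intro ennreal_plus[symmetric]) auto
  also have "z ^ (k + 1) * p + z ^ k * (1 - p) = (1 - p + p * z) * z ^ k"
    by (simp add: algebra_simps)
  finally show ?thesis
    using assms by (simp add: ennreal_mult)
qed

lemma pgf_num_colors_pmf:
  assumes "0 \<le> a" "0 \<le> z" "2 \<le> t"
  shows "(\<integral>\<^sup>+k. ennreal (z ^ k) \<partial>num_colors_pmf a d t) =
         ennreal (z\<^sup>2 * (\<Prod>i\<in>{3..t}. 1 - seed_prob a i + seed_prob a i * z))"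
  using assms(3)
proof (induction t rule: nat_induct_at_least)
  case base
  then show ?case by (simp add: num_colors_pmf_2)
next
  case (Suc t)
  have factor_nonneg: "0 \<le> 1 - seed_prob a i + seed_prob a i * z" if "3 \<le> i" for i
    using seed_prob_le_1[OF assms(1) that] seed_prob_nonneg[of a i] assms(2)
    by (simp add: add_nonneg_nonneg)
  define p where "p = seed_prob a (Suc t)"
  have p: "0 \<le> p" "p \<le> 1"
    using Suc.hyps seed_prob_le_1[OF assms(1), of "Suc t"] seed_prob_nonneg[of a] by (auto simp: p_def)
  have "(\<integral>\<^sup>+k. ennreal (z ^ k) \<partial>num_colors_pmf a d (Suc t)) =
        (\<integral>\<^sup>+k. \<integral>\<^sup>+b. ennreal (z ^ (k + of_bool b)) \<partial>bernoulli_pmf p \<partial>num_colors_pmf a d t)"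
    by (simp only: num_colors_pmf_Suc[OF Suc.hyps] nn_integral_bind_pmf nn_integral_map_pmf p_def)
  also have "\<dots> = ennreal (1 - p + p * z) * (\<integral>\<^sup>+k. ennreal (z ^ k) \<partial>num_colors_pmf a d t)"
    unfolding nn_integral_bernoulli_power[OF p assms(2)] by (rule nn_integral_cmult) simp
  also have "\<dots> = ennreal ((1 - p + p * z) * (z\<^sup>2 * (\<Prod>i\<in>{3..t}. 1 - seed_prob a i + seed_prob a i * z)))"
    unfolding Suc.IH by (rule ennreal_mult[symmetric])
      (use factor_nonneg p assms(2) mult_nonneg_nonneg[of p z] in \<open>auto intro!: mult_nonneg_nonneg prod_nonneg\<close>)
  also have "\<dots> = ennreal (z\<^sup>2 * (\<Prod>i\<in>{3..Suc t}. 1 - seed_prob a i + seed_prob a i * z))"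
    using Suc.hyps by (simp add: p_def prod.nat_ivl_Suc' mult_ac)
  finally show ?case .
qed

section \<open>Chernoff bounds from the generating function\<close>

lemma prob_le_pgf_div:
  fixes M :: "nat pmf"
  assumes pgf: "(\<integral>\<^sup>+k. ennreal (z ^ k) \<partial>M) \<le> ennreal B"
    and "0 < w" "0 \<le> z" "0 \<le> B" and above: "\<And>k. k \<in> A \<Longrightarrow> w \<le> z ^ k"
  shows "measure_pmf.prob M A \<le> B / w"
proof -
  have "indicator A k \<le> ennreal (1 / w) * ennreal (z ^ k)" for k
  proof (cases "k \<in> A")
    case True
    have "ennreal 1 \<le> ennreal (1 / w * z ^ k)"
      using above[OF True] \<open>0 < w\<close> by (intro ennreal_leI) (simp add: field_simps)
    also have "\<dots> = ennreal (1 / w) * ennreal (z ^ k)"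
      using \<open>0 < w\<close> \<open>0 \<le> z\<close> by (intro ennreal_mult) auto
    finally show ?thesis using True by simp
  qed simp
  then have "(\<integral>\<^sup>+k. indicator A k \<partial>M) \<le> (\<integral>\<^sup>+k. ennreal (1 / w) * ennreal (z ^ k) \<partial>M)"
    by (intro nn_integral_mono)
  then have "emeasure M A \<le> (\<integral>\<^sup>+k. ennreal (1 / w) * ennreal (z ^ k) \<partial>M)"
    by simp
  also have "\<dots> = ennreal (1 / w) * (\<integral>\<^sup>+k. ennreal (z ^ k) \<partial>M)"
    by (rule nn_integral_cmult) simp
  also have "\<dots> \<le> ennreal (1 / w) * ennreal B"
    using pgf by (rule mult_left_mono) simp
  also have "\<dots> = ennreal (B / w)"
    using \<open>0 < w\<close> \<open>0 \<le> B\<close> by (simp add: ennreal_mult[symmetric])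
  finally show ?thesis
    using \<open>0 < w\<close> \<open>0 \<le> B\<close> by (simp add: measure_pmf.emeasure_eq_measure ennreal_le_iff)
qed

lemma ln_2_le_3_4: "ln 2 \<le> (3/4 :: real)"
proof -
  have "1 + 3/4 + (3/4)\<^sup>2 / 2 \<le> exp (3/4 :: real)"
    by (rule exp_lower_Taylor_quadratic) simp
  then have "ln 2 \<le> ln (exp (3/4 :: real))"
    by (subst ln_le_cancel_iff) (auto simp: power2_eq_square)
  then show ?thesis by simp
qed

lemma pgf_upper_tail:
  fixes M :: "nat pmf" and p :: "'a \<Rightarrow> real"
  assumes pgf: "\<And>z. 0 \<le> z \<Longrightarrow> (\<integral>\<^sup>+k. ennreal (z ^ k) \<partial>M) = ennreal (z ^ k0 * (\<Prod>i\<in>I. 1 - p i + p i * z))"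
    and "finite I" and p: "\<And>i. i \<in> I \<Longrightarrow> 0 \<le> p i \<and> p i \<le> 1"
    and "0 < m" and mean: "(\<Sum>i\<in>I. p i) \<le> 11/10 * m"
  shows "measure_pmf.prob M {k. 2 * m < real k} \<le> 2 ^ k0 * exp (- m / 10)"
proof -
  let ?S = "\<Sum>i\<in>I. p i"
  have "0 \<le> 1 - p i + p i * 2 \<and> 1 - p i + p i * 2 \<le> exp (p i)" if "i \<in> I" for i
    using p[OF that] exp_ge_add_one_self[of "p i"] by (intro conjI) linarith+
  then have "(\<Prod>i\<in>I. 1 - p i + p i * 2) \<le> (\<Prod>i\<in>I. exp (p i))"
    by (rule prod_mono)
  also have "\<dots> = exp ?S"
    using \<open>finite I\<close> by (simp add: exp_sum)
  finally have "(\<integral>\<^sup>+k. ennreal (2 ^ k) \<partial>M) \<le> ennreal (2 ^ k0 * exp ?S)"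
    unfolding pgf[of 2, simplified] by (intro ennreal_leI mult_left_mono) auto
  then have "measure_pmf.prob M {k. 2 * m < real k} \<le> 2 ^ k0 * exp ?S / exp (2 * m * ln 2)"
  proof (rule prob_le_pgf_div)
    fix k assume "k \<in> {k. 2 * m < real k}"
    then have "exp (2 * m * ln 2) \<le> exp (real k * ln 2)" by simp
    then show "exp (2 * m * ln 2) \<le> 2 ^ k" by (simp add: exp_of_nat_mult)
  qed auto
  also have "\<dots> = 2 ^ k0 * exp (?S - 2 * m * ln 2)"
    by (simp add: exp_diff)
  also have "\<dots> \<le> 2 ^ k0 * exp (- m / 10)"
  proof -
    have "2 * m * (2/3) \<le> 2 * m * ln 2"
      using ln2_ge_two_thirds \<open>0 < m\<close> by (intro mult_left_mono) auto
    then have "?S - 2 * m * ln 2 \<le> - m / 10" using mean \<open>0 < m\<close> by linarith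
    then show ?thesis by simp
  qed
  finally show ?thesis .
qed

lemma pgf_lower_tail:
  fixes M :: "nat pmf" and p :: "'a \<Rightarrow> real"
  assumes pgf: "\<And>z. 0 \<le> z \<Longrightarrow> (\<integral>\<^sup>+k. ennreal (z ^ k) \<partial>M) = ennreal (z ^ k0 * (\<Prod>i\<in>I. 1 - p i + p i * z))"
    and "finite I" and p: "\<And>i. i \<in> I \<Longrightarrow> 0 \<le> p i \<and> p i \<le> 1"
    and "0 < m" and mean: "19/20 * m \<le> (\<Sum>i\<in>I. p i)"
  shows "measure_pmf.prob M {k. real k < m / 2} \<le> exp (- m / 10)"
proof -
  let ?S = "\<Sum>i\<in>I. p i"
  have factors: "0 \<le> 1 - p i + p i * (1/2) \<and> 1 - p i + p i * (1/2) \<le> exp (- p i / 2)" if "i \<in> I" for i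
    using p[OF that] exp_ge_add_one_self[of "- p i / 2"] by (intro conjI) linarith+
  have "(1/2) ^ k0 * (\<Prod>i\<in>I. 1 - p i + p i * (1/2)) \<le> (\<Prod>i\<in>I. 1 - p i + p i * (1/2))"
    using factors by (intro mult_left_le_one_le prod_nonneg) (auto simp: power_le_one)
  also have "\<dots> \<le> (\<Prod>i\<in>I. exp (- p i / 2))"
    using factors by (rule prod_mono)
  also have "\<dots> = exp (- ?S / 2)"
    using \<open>finite I\<close> by (simp add: exp_sum[symmetric] sum_negf sum_divide_distrib)
  finally have pgf_bound: "(1/2) ^ k0 * (\<Prod>i\<in>I. 1 - p i + p i * (1/2)) \<le> exp (- ?S / 2)" .
  have "(\<integral>\<^sup>+k. ennreal ((1/2) ^ k) \<partial>M) \<le> ennreal (exp (- ?S / 2))"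
    by (subst pgf) (use ennreal_leI[OF pgf_bound] in auto)
  then have "measure_pmf.prob M {k. real k < m / 2} \<le> exp (- ?S / 2) / exp (m / 2 * - ln 2)"
  proof (rule prob_le_pgf_div)
    fix k assume "k \<in> {k. real k < m / 2}"
    then have "m / 2 * - ln 2 \<le> real k * - ln 2"
      by (intro mult_right_mono_neg) auto
    then have "exp (m / 2 * - ln 2) \<le> exp (- ln 2) ^ k"
      by (simp add: exp_of_nat_mult[symmetric])
    then show "exp (m / 2 * - ln 2) \<le> (1/2) ^ k"
      by (simp add: exp_minus inverse_eq_divide)
  qed auto
  also have "\<dots> = exp (- ?S / 2 + (m / 2) * ln 2)"
    by (simp add: exp_diff[symmetric])
  also have "\<dots> \<le> exp (- m / 10)"
  proof -
    have "m / 2 * ln 2 \<le> m / 2 * (3/4)"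
      using ln_2_le_3_4 \<open>0 < m\<close> by (intro mult_left_mono) auto
    then have "- ?S / 2 + (m / 2) * ln 2 \<le> - m / 10" using mean by linarith
    then show ?thesis by simp
  qed
  finally show ?thesis .
qed

section \<open>The expected number of new colours\<close>

lemma sum_seed_prob_ge:
  assumes "0 \<le> a" "40 \<le> t"
  shows "19/20 * (real t / ln (real t) powr a) \<le> (\<Sum>i\<in>{3..t}. seed_prob a i)"
proof -
  have ln_t: "1 \<le> ln (real t)" using one_le_ln[of "real t"] assms(2) by simp
  have "seed_prob a t \<le> seed_prob a i" if "i \<in> {3..t}" for i
    unfolding seed_prob_def using that assms(1) one_le_ln[of "real i"]
    by (intro powr_mono2') auto
  then have "(\<Sum>i\<in>{3..t}. seed_prob a t) \<le> (\<Sum>i\<in>{3..t}. seed_prob a i)"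
    by (rule sum_mono)
  moreover have "(\<Sum>i\<in>{3..t}. seed_prob a t) = real (t - 2) / ln (real t) powr a"
    using ln_t by (simp add: seed_prob_def powr_minus_divide)
  moreover have "19/20 * real t \<le> real (t - 2)"
    using assms(2) by (simp add: of_nat_diff)
  then have "19/20 * real t / ln (real t) powr a \<le> real (t - 2) / ln (real t) powr a"
    by (rule divide_right_mono) simp
  then have "19/20 * (real t / ln (real t) powr a) \<le> real (t - 2) / ln (real t) powr a"
    by simp
  ultimately show ?thesis by linarith
qed

lemma sum_seed_prob_le_split:
  assumes "0 < a" "0 < q" "3 \<le> t"
  shows "(\<Sum>i\<in>{3..t}. seed_prob a i) \<le> real t powr q + real t * (q powr (- a) * seed_prob a t)"
proof -
  define s where "s = real t powr q"
  have ln_t: "1 \<le> ln (real t)" using one_le_ln[of "real t"] assms(3) by simp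
  have tail_nonneg: "0 \<le> q powr (- a) * seed_prob a t"
    by (simp add: seed_prob_nonneg)
  have "seed_prob a i \<le> of_bool (real i \<le> s) + q powr (- a) * seed_prob a t"
    if i: "i \<in> {3..t}" for i
  proof (cases "real i \<le> s")
    case True
    then show ?thesis using seed_prob_le_1[of a i] tail_nonneg assms(1) i by simp
  next
    case False
    have "q * ln (real t) = ln s"
      unfolding s_def using assms(3) by (simp add: ln_powr)
    also have "\<dots> \<le> ln (real i)"
      using False i assms(3) unfolding s_def by (subst ln_le_cancel_iff) auto
    finally have "q * ln (real t) \<le> ln (real i)" .
    then have "seed_prob a i \<le> (q * ln (real t)) powr (- a)"
      unfolding seed_prob_def using assms(1,2) ln_t by (intro powr_mono2') auto
    also have "(q * ln (real t)) powr (- a) = q powr (- a) * seed_prob a t"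
      unfolding seed_prob_def using assms(2) ln_t by (simp add: powr_mult)
    finally show ?thesis using False by simp
  qed
  then have "(\<Sum>i\<in>{3..t}. seed_prob a i) \<le>
             (\<Sum>i\<in>{3..t}. of_bool (real i \<le> s) + q powr (- a) * seed_prob a t)"
    by (rule sum_mono)
  also have "\<dots> = real (card ({3..t} \<inter> {i. real i \<le> s})) + real (t - 2) * (q powr (- a) * seed_prob a t)"
    by (simp add: sum.distrib)
  also have "real (card ({3..t} \<inter> {i. real i \<le> s})) \<le> s"
  proof -
    have "{3..t} \<inter> {i. real i \<le> s} \<subseteq> {1..nat \<lfloor>s\<rfloor>}"
      by (auto simp: le_nat_iff le_floor_iff)
    then have "card ({3..t} \<inter> {i. real i \<le> s}) \<le> nat \<lfloor>s\<rfloor>"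
      using card_mono[of "{1..nat \<lfloor>s\<rfloor>}"] by simp
    moreover have "real (nat \<lfloor>s\<rfloor>) \<le> s" unfolding s_def by simp
    ultimately show ?thesis by linarith
  qed
  also have "real (t - 2) * (q powr (- a) * seed_prob a t) \<le> real t * (q powr (- a) * seed_prob a t)"
    by (intro mult_right_mono) (auto simp: seed_prob_nonneg)
  finally show ?thesis unfolding s_def by simp
qed

lemma eventually_sum_seed_prob_le:
  assumes "0 < a"
  shows "eventually (\<lambda>t. (\<Sum>i\<in>{3..t}. seed_prob a i) \<le> 11/10 * (real t / ln (real t) powr a)) sequentially"
proof -
  define q where "q = (21/20 :: real) powr (- 1 / a)"
  have "0 < q" "q < 1" unfolding q_def using assms
    by (auto intro!: powr_less_one simp: field_simps)
  have q_a: "q powr (- a) = 21/20"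
    unfolding q_def powr_powr using assms by simp
  have "eventually (\<lambda>x. x powr q \<le> x / (20 * ln x powr a)) at_top"
    using assms \<open>0 < q\<close> \<open>q < 1\<close> by real_asymp
  then have "eventually (\<lambda>t. real t powr q \<le> real t / (20 * ln (real t) powr a)) sequentially"
    by (rule eventually_compose_filterlim[OF _ filterlim_real_sequentially])
  then show ?thesis
    using eventually_ge_at_top[of 3]
  proof eventually_elim
    case (elim t)
    then have "(\<Sum>i\<in>{3..t}. seed_prob a i) \<le> real t / (20 * ln (real t) powr a) + real t * (21/20 * seed_prob a t)"
      using sum_seed_prob_le_split[OF assms \<open>0 < q\<close>, of t] q_a by simp
    moreover have "real t * (21/20 * seed_prob a t) = 21/20 * (real t / ln (real t) powr a)"
      by (simp add: seed_prob_def powr_minus_divide)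
    ultimately show ?case by simp
  qed
qed

section \<open>Union bound over the time steps\<close>

lemma prob_card_colors_at:
  assumes "2 \<le> t" "t \<le> n"
  shows "measure_pmf.prob (sm_gen a d n) {G. P (card (colors_at G t))} =
         measure_pmf.prob (num_colors_pmf a d t) {k. P k}"
proof -
  have "colors_at G t = set (take t (cols G))" if "G \<in> set_pmf (sm_gen a d n)" for G
    using set_sm_gen[OF that] assms by (force simp: colors_at_def in_set_conv_nth)
  then have "measure_pmf.prob (sm_gen a d n) {G. P (card (colors_at G t))} =
             measure_pmf.prob (sm_gen a d n) {G. P (card (set (take t (cols G))))}"
    by (intro measure_pmf.finite_measure_eq_AE) (auto intro!: AE_pmfI)
  also have "\<dots> = measure_pmf.prob (map_pmf (\<lambda>G. take t (cols G)) (sm_gen a d n)) {xs. P (card (set xs))}"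
    by (simp add: vimage_def)
  also have "\<dots> = measure_pmf.prob (num_colors_pmf a d t) {k. P k}"
    by (simp add: sm_gen_take_cols[OF assms] num_colors_pmf_def vimage_def)
  finally show ?thesis .
qed

lemma prob_colors_at_out_of_range:
  assumes "0 \<le> a" "3 \<le> t" "t \<le> n"
    and lower: "19/20 * (real t / ln (real t) powr a) \<le> (\<Sum>i\<in>{3..t}. seed_prob a i)"
    and upper: "(\<Sum>i\<in>{3..t}. seed_prob a i) \<le> 11/10 * (real t / ln (real t) powr a)"
  shows "measure_pmf.prob (sm_gen a d n)
           {G. \<not> (real t / (2 * ln (real t) powr a) \<le> real (card (colors_at G t)) \<and>
                  real (card (colors_at G t)) \<le> 2 * real t / ln (real t) powr a)}
         \<le> 5 * exp (- (real t / ln (real t) powr a) / 10)"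
proof -
  define m where "m = real t / ln (real t) powr a"
  have "0 < m" using one_le_ln[of "real t"] assms(2) by (simp add: m_def)
  have pgf: "\<And>z. 0 \<le> z \<Longrightarrow> (\<integral>\<^sup>+k. ennreal (z ^ k) \<partial>num_colors_pmf a d t) =
      ennreal (z ^ 2 * (\<Prod>i\<in>{3..t}. 1 - seed_prob a i + seed_prob a i * z))"
    using pgf_num_colors_pmf assms(1,2) by simp
  have p: "\<And>i. i \<in> {3..t} \<Longrightarrow> 0 \<le> seed_prob a i \<and> seed_prob a i \<le> 1"
    using seed_prob_nonneg seed_prob_le_1 assms(1) by auto
  have thresholds: "real t / (2 * ln (real t) powr a) = m / 2" "2 * real t / ln (real t) powr a = 2 * m"
    by (simp_all add: m_def)
  have "measure_pmf.prob (sm_gen a d n)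
           {G. \<not> (real t / (2 * ln (real t) powr a) \<le> real (card (colors_at G t)) \<and>
                  real (card (colors_at G t)) \<le> 2 * real t / ln (real t) powr a)} =
        measure_pmf.prob (num_colors_pmf a d t) {k. \<not> (m / 2 \<le> real k \<and> real k \<le> 2 * m)}"
    unfolding thresholds using assms(2,3)
    by (intro prob_card_colors_at[where P = "\<lambda>k. \<not> (m / 2 \<le> real k \<and> real k \<le> 2 * m)"]) auto
  also have "\<dots> \<le> measure_pmf.prob (num_colors_pmf a d t) ({k. real k < m / 2} \<union> {k. 2 * m < real k})"
    by (intro measure_pmf.finite_measure_mono) auto
  also have "\<dots> \<le> measure_pmf.prob (num_colors_pmf a d t) {k. real k < m / 2} +
                  measure_pmf.prob (num_colors_pmf a d t) {k. 2 * m < real k}"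
    by (rule measure_subadditive) (auto simp: measure_pmf.emeasure_eq_measure)
  also have "\<dots> \<le> exp (- m / 10) + 2 ^ 2 * exp (- m / 10)"
    using pgf_lower_tail[OF pgf _ p \<open>0 < m\<close>] pgf_upper_tail[OF pgf _ p \<open>0 < m\<close>] lower upper
    by (intro add_mono) (simp_all add: m_def)
  finally show ?thesis by (simp add: m_def)
qed

lemma sum_exp_neg_le:
  assumes "0 < c"
  shows "(\<Sum>t=N..n. exp (- c * real t)) \<le> exp (- c * real N) * (1 + 1 / c)"
proof -
  define x where "x = exp (- c)"
  have x: "0 < x" "x < 1" using assms by (auto simp: x_def)
  have "(\<Sum>t=N..n. exp (- c * real t)) = (\<Sum>t=N..n. x ^ t)"
    by (simp add: x_def exp_of_nat_mult[symmetric] mult.commute)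
  also have "\<dots> \<le> x ^ N / (1 - x)"
    using x by (auto simp: sum_gp intro!: divide_right_mono)
  also have "\<dots> \<le> x ^ N * (1 + 1 / c)"
  proof -
    have "1 + c \<le> exp c" by (rule exp_ge_add_one_self)
    then have "c / (1 + c) \<le> 1 - x"
      using assms by (simp add: x_def exp_minus field_simps)
    then have "1 / (1 - x) \<le> 1 / (c / (1 + c))"
      using assms x by (intro divide_left_mono mult_pos_pos) auto
    also have "\<dots> = 1 + 1 / c"
      using assms by (simp add: field_simps)
    finally show ?thesis
      using x by (simp add: divide_inverse mult_left_mono)
  qed
  finally show ?thesis
    by (simp add: x_def exp_of_nat_mult[symmetric] mult.commute)
qed

lemma prob_colors_in_range_ge:
  assumes "0 < a" "3 \<le> n" and T0_le: "real T0 \<le> ln (real n) powr (a + 1)"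
    and T0: "\<And>t. T0 \<le> t \<Longrightarrow> 3 \<le> t \<and>
               19/20 * (real t / ln (real t) powr a) \<le> (\<Sum>i\<in>{3..t}. seed_prob a i) \<and>
               (\<Sum>i\<in>{3..t}. seed_prob a i) \<le> 11/10 * (real t / ln (real t) powr a)"
  shows "1 - 5 * exp (- ln (real n) / 10) * (1 + 10 * ln (real n) powr a) \<le>
         measure_pmf.prob (sm_gen a d n)
            {G. \<forall>t::nat. ln (real n) powr (a + 1) \<le> real t \<and> t \<le> n \<longrightarrow>
                 real t / (2 * ln (real t) powr a) \<le> real (card (colors_at G t)) \<and>
                 real (card (colors_at G t)) \<le> 2 * real t / ln (real t) powr a}"
    (is "_ \<le> measure_pmf.prob ?M ?E")
proof -
  define L where "L = ln (real n) powr a"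
  define c where "c = 1 / (10 * L)"
  define N where "N = nat \<lceil>ln (real n) powr (a + 1)\<rceil>"
  define bad where "bad t = {G. \<not> (real t / (2 * ln (real t) powr a) \<le> real (card (colors_at G t)) \<and>
                 real (card (colors_at G t)) \<le> 2 * real t / ln (real t) powr a)}" for t
  have ln_n: "1 \<le> ln (real n)" using one_le_ln[of "real n"] assms(2) by simp
  have "1 \<le> L" unfolding L_def using ln_n assms(1) by (intro ge_one_powr_ge_zero) auto
  then have "0 < c" by (simp add: c_def)
  have c_N: "ln (real n) / 10 \<le> c * real N"
  proof -
    have "ln (real n) powr (a + 1) = L * ln (real n)"
      unfolding L_def using ln_n by (simp add: powr_add)
    moreover have "ln (real n) powr (a + 1) \<le> real N"
      unfolding N_def by linarith
    ultimately show ?thesis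
      using \<open>0 < c\<close> \<open>1 \<le> L\<close> mult_left_mono[of _ _ c] by (fastforce simp: c_def)
  qed
  have bad_le: "measure_pmf.prob ?M (bad t) \<le> 5 * exp (- c * real t)" if t: "t \<in> {N..n}" for t
  proof -
    have "ln (real n) powr (a + 1) \<le> real t"
      using t unfolding N_def by (simp add: nat_le_iff ceiling_le_iff)
    with T0_le have "T0 \<le> t" by linarith
    with T0 have "3 \<le> t" by blast
    then have ln_t: "1 \<le> ln (real t)" using one_le_ln[of "real t"] by simp
    have "measure_pmf.prob ?M (bad t) \<le> 5 * exp (- (real t / ln (real t) powr a) / 10)"
      unfolding bad_def using assms(1) t T0[OF \<open>T0 \<le> t\<close>]
      by (intro prob_colors_at_out_of_range) auto
    also have "\<dots> \<le> 5 * exp (- c * real t)"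
    proof -
      have "ln (real t) \<le> ln (real n)"
        using t \<open>3 \<le> t\<close> by simp
      then have "ln (real t) powr a \<le> L"
        unfolding L_def using ln_t assms(1) by (intro powr_mono2) auto
      then have "real t / L \<le> real t / ln (real t) powr a"
        using ln_t \<open>1 \<le> L\<close> by (intro divide_left_mono mult_pos_pos) auto
      then show ?thesis by (simp add: c_def)
    qed
    finally show ?thesis .
  qed
  have "- ?E \<subseteq> (\<Union>t\<in>{N..n}. bad t)"
    unfolding bad_def N_def by (auto simp: nat_le_iff ceiling_le_iff)
  then have "measure_pmf.prob ?M (- ?E) \<le> (\<Sum>t=N..n. measure_pmf.prob ?M (bad t))"
    by (intro order.trans[OF measure_pmf.finite_measure_mono measure_pmf.finite_measure_subadditive_finite]) auto
  also have "\<dots> \<le> 5 * (\<Sum>t=N..n. exp (- c * real t))"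
    unfolding sum_distrib_left by (intro sum_mono bad_le)
  also have "\<dots> \<le> 5 * (exp (- c * real N) * (1 + 10 * L))"
    using sum_exp_neg_le[OF \<open>0 < c\<close>, of N n] by (simp add: c_def)
  also have "\<dots> \<le> 5 * exp (- ln (real n) / 10) * (1 + 10 * L)"
    using c_N \<open>1 \<le> L\<close> by simp
  finally show ?thesis
    using measure_pmf.prob_compl[of ?E ?M] by (simp add: L_def Compl_eq_Diff_UNIV)
qed

theorem lemma2:
  fixes a :: real and d :: nat
  assumes "a > 1" and "d \<ge> 4"
  shows "(\<lambda>n. measure_pmf.prob (sm_gen a d n)
            {G. \<forall>t::nat. ln (real n) powr (a + 1) \<le> real t \<and> t \<le> n \<longrightarrow>
                 real t / (2 * ln (real t) powr a) \<le> real (card (colors_at G t)) \<and>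
                 real (card (colors_at G t)) \<le> 2 * real t / ln (real t) powr a})
         \<longlonglongrightarrow> 1"
proof -
  have "0 < a" using assms(1) by simp
  have "eventually (\<lambda>t. 3 \<le> t \<and>
               19/20 * (real t / ln (real t) powr a) \<le> (\<Sum>i\<in>{3..t}. seed_prob a i) \<and>
               (\<Sum>i\<in>{3..t}. seed_prob a i) \<le> 11/10 * (real t / ln (real t) powr a)) sequentially"
    using eventually_ge_at_top[of 40] eventually_sum_seed_prob_le[OF \<open>0 < a\<close>]
    by eventually_elim (use sum_seed_prob_ge \<open>0 < a\<close> in auto)
  then obtain T0 where T0: "\<And>t. T0 \<le> t \<Longrightarrow> 3 \<le> t \<and>
               19/20 * (real t / ln (real t) powr a) \<le> (\<Sum>i\<in>{3..t}. seed_prob a i) \<and>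
               (\<Sum>i\<in>{3..t}. seed_prob a i) \<le> 11/10 * (real t / ln (real t) powr a)"
    unfolding eventually_sequentially by blast
  have "eventually (\<lambda>n. real T0 \<le> ln (real n) powr (a + 1)) sequentially"
    using \<open>0 < a\<close> by real_asymp
  then have lower_bound: "eventually (\<lambda>n. 1 - 5 * exp (- ln (real n) / 10) * (1 + 10 * ln (real n) powr a) \<le>
               measure_pmf.prob (sm_gen a d n)
            {G. \<forall>t::nat. ln (real n) powr (a + 1) \<le> real t \<and> t \<le> n \<longrightarrow>
                 real t / (2 * ln (real t) powr a) \<le> real (card (colors_at G t)) \<and>
                 real (card (colors_at G t)) \<le> 2 * real t / ln (real t) powr a}) sequentially"
    using eventually_ge_at_top[of 3] by eventually_elim (use prob_colors_in_range_ge[OF \<open>0 < a\<close> _ _ T0] in blast)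
  have lower_bound_lim: "(\<lambda>n. 1 - 5 * exp (- ln (real n) / 10) * (1 + 10 * ln (real n) powr a)) \<longlonglongrightarrow> 1"
    using \<open>0 < a\<close> by real_asymp
  show ?thesis
    by (rule tendsto_sandwich[OF lower_bound _ lower_bound_lim tendsto_const]) simp
qed

end
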